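(* There is an absolute constant $c>0$ such that for every integer $\ell\ge1$, all $n\le m$ and every $X=(x_1,\dots,x_m)\in[n]^m$, $\min_T \ell\text{-DistTree}_T(X)\le c\cdot\mathsf{UB}^{\ell}(X)$, the minimum being over all BSTs $T$ on $[n]$.
   Context: $\log(x)=\log_2(\max\{2,x\})$. For a BST $T$ on $[n]$ with root $r$, let $d_T(a,b)$ be the number of edges between $a$ and $b$ in $T$, set $x_0=r$, and define $\ell\text{-DistTree}_T(X)=\sum_{i=1}^m\min_{j\in[i-\ell,i),\,j\ge0}\{d_T(x_i,x_j)+1\}$. $\mathsf{UB}^{\ell}(X)=\sum_{t=1}^m\min_{t'\in[t-\ell,t),\,t'\ge1}\log\big(|x_t-x_{t'}|+\rho_t(x_{t'})\big)$, where $\rho_t(a)$ is the number of distinct keys accessed strictly between the last time $s<t$ with $x_s=a$ and time $t$ (all keys considered accessed at time $0$), and the term for $t=1$ (empty range) is interpreted as $\log n$. *)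

theory Defs
  imports Complex_Main "HOL-Library.Tree"
begin

definition lg :: "real \<Rightarrow> real" where
  "lg x = log 2 (max 2 x)"

fun bst_path :: "nat tree \<Rightarrow> nat \<Rightarrow> nat list" where
  "bst_path Leaf a = []"
| "bst_path (Node l x r) a =
     x # (if a < x then bst_path l a else if x < a then bst_path r a else [])"

fun lcp_len :: "nat list \<Rightarrow> nat list \<Rightarrow> nat" where
  "lcp_len (x # xs) (y # ys) = (if x = y then Suc (lcp_len xs ys) else 0)"
| "lcp_len _ _ = 0"

definition tree_dist :: "nat tree \<Rightarrow> nat \<Rightarrow> nat \<Rightarrow> nat" where
  "tree_dist T a b =
     length (bst_path T a) + length (bst_path T b)
     - 2 * lcp_len (bst_path T a) (bst_path T b)"

text \<open>Access sequence X = [x_1,...,x_m] as a list; x_i = X ! (i-1); x_0 = root.\<close>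
definition acc :: "nat tree \<Rightarrow> nat list \<Rightarrow> nat \<Rightarrow> nat" where
  "acc T X j = (if j = 0 then value T else X ! (j - 1))"

definition DistTree :: "nat \<Rightarrow> nat tree \<Rightarrow> nat list \<Rightarrow> nat" where
  "DistTree l T X =
     (\<Sum>i=1..length X. Min ((\<lambda>j. tree_dist T (acc T X i) (acc T X j) + 1) ` {i - l..<i}))"

text \<open>rho_t(a): number of distinct keys accessed strictly between the last time s<t
  with x_s = a (time 0 counts as an access of every key) and time t.\<close>
definition rho :: "nat list \<Rightarrow> nat \<Rightarrow> nat \<Rightarrow> nat" where
  "rho X t a =
     (let s = Max {s. s < t \<and> (s = 0 \<or> X ! (s - 1) = a)}
      in card {X ! (u - 1) | u. s < u \<and> u < t})"

definition UB :: "nat \<Rightarrow> nat \<Rightarrow> nat list \<Rightarrow> real" where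
  "UB l n X =
     (\<Sum>t=1..length X.
        (let S = {t'. 1 \<le> t' \<and> t - l \<le> t' \<and> t' < t} in
         if S = {} then lg (real n)
         else Min ((\<lambda>t'. lg (\<bar>real (X ! (t - 1)) - real (X ! (t' - 1))\<bar>
                              + real (rho X t (X ! (t' - 1))))) ` S)))"

end

(*
  Take 2^K >= n and, for each shift s < 2^K, the perfectly balanced search tree on the keys
  1, ..., 2^(K+1) - 1, shifted down by s and pruned to the keys 1..n. Two keys a and b are
  separated at level h of this tree only if a multiple of 2^h lies between a + s and b + s; for a
  uniformly random shift this has probability at most min 1 ((|a - b| + 1) / 2^h), so the expected
  distance between a and b is O(log |a - b|). Serving every access x_t from the earlier access that
  realises its term of UB (dropping the nonnegative rho summand), and the first access from the
  root at distance O(K) = O(log n), the expected cost of the random tree is O(UB); hence some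
  shift does at least as well as the average.
*)

theory Submission
  imports Defs "HOL-Library.Log_Nat" "HOL-Number_Theory.Cong"
begin

lemma lg_ge_1: "1 \<le> lg x"
  unfolding lg_def by simp

lemma lg_mono: "x \<le> y \<Longrightarrow> lg x \<le> lg y"
  unfolding lg_def by simp

lemma floorlog_2_le_lg: "real (floorlog 2 x) \<le> lg (real x) + 1"
proof (cases "x = 0")
  case False
  then have "real (nat \<lfloor>log 2 (real x)\<rfloor>) \<le> log 2 (real x)"
    by simp
  also have "\<dots> \<le> lg (real x)"
    using False unfolding lg_def by simp
  finally show ?thesis
    using False by (simp add: floorlog_def)
qed (use lg_ge_1[of 0] in \<open>simp add: floorlog_def\<close>)

lemma less_power_floorlog_2: "x < 2 ^ floorlog 2 x"
  by (rule floorlog_leD) simp_all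

lemma sum_min_one_geometric_le: "(\<Sum>h<M. min 1 (2 ^ L / 2 ^ h :: real)) \<le> real L + 2"
proof -
  have "(\<Sum>h<M. min 1 (2 ^ L / 2 ^ h :: real))
      \<le> (if M \<le> L then real M else real L + 2 - 2 ^ Suc L / 2 ^ M)"
  proof (induction M)
    case (Suc M)
    consider "Suc M \<le> L" | "M = L" | "L < M" by linarith
    then show ?case
    proof cases
      case 1
      then have "(1::real) \<le> 2 ^ L / 2 ^ M"
        by (simp add: le_divide_eq)
      then show ?thesis using 1 Suc by simp
    next
      case 2
      then show ?thesis using Suc by simp
    next
      case 3
      then have "(2::real) ^ L / 2 ^ M \<le> 1"
        by (simp add: divide_le_eq)
      moreover have "(2::real) ^ Suc L / 2 ^ M = 2 * (2 ^ L / 2 ^ M)"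
        and "(2::real) ^ Suc L / 2 ^ Suc M = 2 ^ L / 2 ^ M"
        by simp_all
      ultimately show ?thesis using 3 Suc by simp
    qed
  qed simp
  also have "\<dots> \<le> real L + 2"
    by simp
  finally show ?thesis .
qed

lemma ex_le_average:
  fixes f :: "'a \<Rightarrow> real" and B :: real
  assumes "finite A" "A \<noteq> {}" "sum f A \<le> card A * B"
  shows "\<exists>a\<in>A. f a \<le> B"
proof (rule ccontr)
  assume "\<not> (\<exists>a\<in>A. f a \<le> B)"
  then have "(\<Sum>a\<in>A. B) < sum f A"
    using assms(1,2) by (intro sum_strict_mono) auto
  with assms(3) show False by simp
qed

lemma length_bst_path_le_height: "length (bst_path T a) \<le> height T"
  by (induction T) auto

lemma tree_dist_le_height: "tree_dist T a b \<le> 2 * height T"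
  unfolding tree_dist_def
  using length_bst_path_le_height[of T a] length_bst_path_le_height[of T b] by linarith

lemma tree_dist_Node_left: "a < x \<Longrightarrow> b < x \<Longrightarrow> tree_dist (Node l x r) a b = tree_dist l a b"
  unfolding tree_dist_def by simp

lemma tree_dist_Node_right: "x < a \<Longrightarrow> x < b \<Longrightarrow> tree_dist (Node l x r) a b = tree_dist r a b"
  unfolding tree_dist_def by simp

definition dyadic_cut :: "nat \<Rightarrow> nat \<Rightarrow> nat \<Rightarrow> bool" where
  "dyadic_cut h p q \<longleftrightarrow> (\<exists>k. min p q \<le> k \<and> k \<le> max p q \<and> 2 ^ h dvd k)"

lemma dyadic_cut_mono: "h' \<le> h \<Longrightarrow> dyadic_cut h p q \<Longrightarrow> dyadic_cut h' p q"
  unfolding dyadic_cut_def by (meson dvd_trans le_imp_power_dvd)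

lemma not_dyadic_cut_same_side:
  assumes "\<not> dyadic_cut h p q" "2 ^ h dvd r"
  shows "p < r \<and> q < r \<or> r < p \<and> r < q"
  using assms unfolding dyadic_cut_def
  by (metis linorder_not_le max.cobounded1 max.cobounded2 min_le_iff_disj max_def min_def)

lemma card_shifts_dvd_le:
  assumes "0 < q" "q dvd N"
  shows "card {s. s < N \<and> q dvd c + s} \<le> N div q"
proof -
  let ?S = "{s. s < N \<and> q dvd c + s}"
  have "[c + s1 = c + s2] (mod q)" if "s1 \<in> ?S" "s2 \<in> ?S" for s1 s2
    using that by (simp add: cong_def)
  then have inj: "inj_on (\<lambda>s. s div q) ?S"
    by (intro inj_onI) (metis cong_add_lcancel_nat cong_def div_mod_decomp)
  have "s div q < N div q" if "s < N" for s
    using that assms(2) by (metis dvd_div_mult_self less_mult_imp_div_less)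
  then have img: "(\<lambda>s. s div q) ` ?S \<subseteq> {..<N div q}"
    by auto
  show ?thesis
    using card_inj_on_le[OF inj img] by simp
qed

lemma card_shifts_dyadic_cut_le:
  assumes "h \<le> K"
  shows "card {s. s < 2 ^ K \<and> dyadic_cut h (a + s) (b + s)} \<le> (max a b - min a b + 1) * 2 ^ (K - h)"
proof -
  let ?M = "\<lambda>i. {s. s < 2 ^ K \<and> 2 ^ h dvd (min a b + i) + s}"
  have "{s. s < 2 ^ K \<and> dyadic_cut h (a + s) (b + s)} \<subseteq> (\<Union>i\<le>max a b - min a b. ?M i)"
  proof
    fix s assume "s \<in> {s. s < 2 ^ K \<and> dyadic_cut h (a + s) (b + s)}"
    then obtain k where "s < 2 ^ K" "2 ^ h dvd k"
      and "min (a + s) (b + s) \<le> k" "k \<le> max (a + s) (b + s)"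
      unfolding dyadic_cut_def by auto
    then have "s \<in> ?M (k - min a b - s)" "k - min a b - s \<le> max a b - min a b"
      by auto
    then show "s \<in> (\<Union>i\<le>max a b - min a b. ?M i)" by blast
  qed
  then have "card {s. s < 2 ^ K \<and> dyadic_cut h (a + s) (b + s)} \<le> card (\<Union>i\<le>max a b - min a b. ?M i)"
    by (intro card_mono) auto
  also have "\<dots> \<le> (\<Sum>i\<le>max a b - min a b. card (?M i))"
    by (rule card_UN_le) simp
  also have "\<dots> \<le> (\<Sum>i\<le>max a b - min a b. 2 ^ K div 2 ^ h)"
    using assms by (intro sum_mono card_shifts_dvd_le) (simp_all add: le_imp_power_dvd)
  also have "\<dots> = (max a b - min a b + 1) * 2 ^ (K - h)"
    using assms by (simp add: power_diff)
  finally show ?thesis .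
qed

lemma sum_card_dyadic_cuts_le:
  assumes "max a b - min a b < 2 ^ L"
  shows "(\<Sum>s<2 ^ K. real (card {h. h < Suc K \<and> dyadic_cut h (a + s) (b + s)}))
    \<le> 2 ^ K * (real L + 2)"
proof -
  have level: "real (card {s. s < 2 ^ K \<and> dyadic_cut h (a + s) (b + s)})
      \<le> 2 ^ K * min 1 (2 ^ L / 2 ^ h)"
    if "h < Suc K" for h
  proof -
    let ?N = "card {s. s < 2 ^ K \<and> dyadic_cut h (a + s) (b + s)}"
    have "?N \<le> card {..<(2::nat) ^ K}"
      by (intro card_mono) auto
    then have all: "real ?N \<le> 2 ^ K"
      using of_nat_mono by fastforce
    have "?N \<le> (max a b - min a b + 1) * 2 ^ (K - h)"
      using card_shifts_dyadic_cut_le that by simp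
    also have "\<dots> \<le> 2 ^ L * 2 ^ (K - h)"
      using assms by (intro mult_le_mono1) simp
    finally have "real ?N \<le> 2 ^ L * 2 ^ (K - h)"
      using of_nat_mono by fastforce
    also have "\<dots> = 2 ^ K * (2 ^ L / 2 ^ h)"
      using that by (simp add: power_diff)
    finally show ?thesis
      using all by (auto simp: min_def)
  qed
  have "(\<Sum>s<2 ^ K. card {h. h < Suc K \<and> dyadic_cut h (a + s) (b + s)})
      = (\<Sum>h<Suc K. card {s. s < 2 ^ K \<and> dyadic_cut h (a + s) (b + s)})"
    using sum.swap_restrict[of "{..<2 ^ K}" "{..<Suc K}" "\<lambda>_ _. 1::nat"
        "\<lambda>s h. dyadic_cut h (a + s) (b + s)"]
    by simp
  then have "(\<Sum>s<2 ^ K. real (card {h. h < Suc K \<and> dyadic_cut h (a + s) (b + s)}))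
      = (\<Sum>h<Suc K. real (card {s. s < 2 ^ K \<and> dyadic_cut h (a + s) (b + s)}))"
    by (metis (no_types) of_nat_sum)
  also have "\<dots> \<le> (\<Sum>h<Suc K. 2 ^ K * min 1 (2 ^ L / 2 ^ h))"
    using level by (intro sum_mono) simp
  also have "\<dots> \<le> 2 ^ K * (real L + 2)"
    using sum_min_one_geometric_le[where M = "Suc K" and L = L]
    by (simp flip: sum_distrib_left del: sum.lessThan_Suc)
  finally show ?thesis .
qed

(* The perfectly balanced tree on the open dyadic interval (j 2^h, (j+1) 2^h), relabelled by
   k |-> k - s and pruned to the keys 1..n: a root outside 1..n is dropped together with the
   child interval that lies entirely outside. *)
fun dyadic_tree :: "nat \<Rightarrow> nat \<Rightarrow> nat \<Rightarrow> nat \<Rightarrow> nat tree" where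
  "dyadic_tree n s 0 j = Leaf"
| "dyadic_tree n s (Suc h) j = (let r = (2 * j + 1) * 2 ^ h in
     if r \<le> s then dyadic_tree n s h (2 * j + 1)
     else if s + n < r then dyadic_tree n s h (2 * j)
     else Node (dyadic_tree n s h (2 * j)) (r - s) (dyadic_tree n s h (2 * j + 1)))"

declare dyadic_tree.simps(2) [simp del]

lemma height_dyadic_tree: "height (dyadic_tree n s h j) \<le> h"
  by (induction h arbitrary: j) (auto simp: dyadic_tree.simps Let_def le_SucI)

lemma set_dyadic_tree:
  "set_tree (dyadic_tree n s h j) =
    {k. 1 \<le> k \<and> k \<le> n \<and> j * 2 ^ h < k + s \<and> k + s < (j + 1) * 2 ^ h}"
proof (induction h arbitrary: j)
  case (Suc h)
  let ?r = "(2 * j + 1) * 2 ^ h"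
  have lo: "j * 2 ^ Suc h = 2 * j * 2 ^ h" and hi: "(j + 1) * 2 ^ Suc h = (2 * j + 1 + 1) * 2 ^ h"
    by simp_all
  have "k + s < ?r \<or> k + s = ?r \<or> ?r < k + s" for k by linarith
  then show ?case
    unfolding lo hi by (auto simp: dyadic_tree.simps Let_def Suc)
qed simp

lemma bst_dyadic_tree: "bst (dyadic_tree n s h j)"
  by (induction h arbitrary: j) (auto simp: dyadic_tree.simps Let_def set_dyadic_tree algebra_simps)

lemma tree_dist_dyadic_tree_Suc:
  assumes "a \<in> set_tree (dyadic_tree n s (Suc h) j)" "b \<in> set_tree (dyadic_tree n s (Suc h) j)"
    and r: "r = (2 * j + 1) * 2 ^ h"
  shows "a + s < r \<Longrightarrow> b + s < r \<Longrightarrow>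
      tree_dist (dyadic_tree n s (Suc h) j) a b = tree_dist (dyadic_tree n s h (2 * j)) a b"
    and "r < a + s \<Longrightarrow> r < b + s \<Longrightarrow>
      tree_dist (dyadic_tree n s (Suc h) j) a b = tree_dist (dyadic_tree n s h (2 * j + 1)) a b"
proof -
  have a: "a \<le> n"
    using assms(1) unfolding set_dyadic_tree by auto
  have tree: "dyadic_tree n s (Suc h) j = (if r \<le> s then dyadic_tree n s h (2 * j + 1)
     else if s + n < r then dyadic_tree n s h (2 * j)
     else Node (dyadic_tree n s h (2 * j)) (r - s) (dyadic_tree n s h (2 * j + 1)))"
    unfolding r by (simp add: dyadic_tree.simps Let_def)
  show "a + s < r \<Longrightarrow> b + s < r \<Longrightarrow>
      tree_dist (dyadic_tree n s (Suc h) j) a b = tree_dist (dyadic_tree n s h (2 * j)) a b"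
    using a unfolding tree by (simp add: tree_dist_Node_left less_diff_conv)
  show "r < a + s \<Longrightarrow> r < b + s \<Longrightarrow>
      tree_dist (dyadic_tree n s (Suc h) j) a b = tree_dist (dyadic_tree n s h (2 * j + 1)) a b"
    using a unfolding tree by (simp add: tree_dist_Node_right less_diff_conv2)
qed

lemma tree_dist_dyadic_tree:
  assumes "a \<in> set_tree (dyadic_tree n s h j)" "b \<in> set_tree (dyadic_tree n s h j)"
  shows "tree_dist (dyadic_tree n s h j) a b
    \<le> 2 * card {h'. h' < h \<and> dyadic_cut h' (a + s) (b + s)}"
  using assms
proof (induction h arbitrary: j)
  case (Suc h)
  show ?case
  proof (cases "dyadic_cut h (a + s) (b + s)")
    case True
    then have "{h'. h' < Suc h \<and> dyadic_cut h' (a + s) (b + s)} = {..<Suc h}"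
      using dyadic_cut_mono by (auto simp: less_Suc_eq_le)
    then show ?thesis
      using tree_dist_le_height[of "dyadic_tree n s (Suc h) j" a b]
        height_dyadic_tree[of n s "Suc h" j]
      by simp
  next
    case False
    then have cuts: "{h'. h' < Suc h \<and> dyadic_cut h' (a + s) (b + s)}
        = {h'. h' < h \<and> dyadic_cut h' (a + s) (b + s)}"
      using less_Suc_eq by auto
    define r where "r = (2 * j + 1) * 2 ^ h"
    have "a + s < r \<and> b + s < r \<or> r < a + s \<and> r < b + s"
      using not_dyadic_cut_same_side[OF False] unfolding r_def by simp
    then show ?thesis
    proof
      assume "a + s < r \<and> b + s < r"
      moreover from this
      have "a \<in> set_tree (dyadic_tree n s h (2 * j))" "b \<in> set_tree (dyadic_tree n s h (2 * j))"
        using Suc.prems unfolding set_dyadic_tree r_def by auto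
      ultimately show ?thesis
        using Suc.IH tree_dist_dyadic_tree_Suc(1)[OF Suc.prems r_def] unfolding cuts by simp
    next
      assume "r < a + s \<and> r < b + s"
      moreover from this
      have "a \<in> set_tree (dyadic_tree n s h (2 * j + 1))"
        and "b \<in> set_tree (dyadic_tree n s h (2 * j + 1))"
        using Suc.prems unfolding set_dyadic_tree r_def by (auto simp: algebra_simps)
      ultimately show ?thesis
        using Suc.IH tree_dist_dyadic_tree_Suc(2)[OF Suc.prems r_def] unfolding cuts by simp
    qed
  qed
qed simp

lemma sum_tree_dist_dyadic_trees_le:
  assumes "a \<in> {1..n}" "b \<in> {1..n}" "n \<le> 2 ^ K"
  shows "(\<Sum>s<2 ^ K. real (tree_dist (dyadic_tree n s (Suc K) 0) a b + 1))
    \<le> 2 ^ K * (9 * lg \<bar>real a - real b\<bar>)"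
proof -
  define \<delta> where "\<delta> = max a b - min a b"
  have dist: "real (tree_dist (dyadic_tree n s (Suc K) 0) a b + 1)
      \<le> 2 * real (card {h. h < Suc K \<and> dyadic_cut h (a + s) (b + s)}) + 1"
    if "s < 2 ^ K" for s
  proof -
    have "a \<in> set_tree (dyadic_tree n s (Suc K) 0)" "b \<in> set_tree (dyadic_tree n s (Suc K) 0)"
      using assms that unfolding set_dyadic_tree by auto
    from tree_dist_dyadic_tree[OF this] show ?thesis
      by simp
  qed
  have "(\<Sum>s<2 ^ K. real (tree_dist (dyadic_tree n s (Suc K) 0) a b + 1))
      \<le> (\<Sum>s<2 ^ K. 2 * real (card {h. h < Suc K \<and> dyadic_cut h (a + s) (b + s)}) + 1)"
    using dist by (intro sum_mono) simp
  also have "\<dots> = 2 * (\<Sum>s<2 ^ K. real (card {h. h < Suc K \<and> dyadic_cut h (a + s) (b + s)})) + 2 ^ K"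
    by (simp add: sum.distrib sum_distrib_left)
  also have "\<dots> \<le> 2 ^ K * (2 * real (floorlog 2 \<delta>) + 5)"
    using sum_card_dyadic_cuts_le[of a b "floorlog 2 \<delta>" K] less_power_floorlog_2[of \<delta>]
    unfolding \<delta>_def by (simp add: algebra_simps)
  also have "\<dots> \<le> 2 ^ K * (9 * lg (real \<delta>))"
    using floorlog_2_le_lg[of \<delta>] lg_ge_1[of "real \<delta>"] by simp
  also have "real \<delta> = \<bar>real a - real b\<bar>"
    unfolding \<delta>_def by (simp add: of_nat_diff)
  finally show ?thesis .
qed

lemma DistTree_le_sum_choice:
  assumes "\<And>t. t \<in> {1..length X} \<Longrightarrow> J t \<in> {t - l..<t}"
  shows "DistTree l T X \<le> (\<Sum>t=1..length X. tree_dist T (acc T X t) (acc T X (J t)) + 1)"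
  unfolding DistTree_def using assms by (intro sum_mono Min_le) auto

lemma DistTree_averaging:
  fixes T :: "'s \<Rightarrow> nat tree" and w :: "nat \<Rightarrow> real"
  assumes "finite S" "S \<noteq> {}"
    and "\<And>t. t \<in> {1..length X} \<Longrightarrow> \<exists>j\<in>{t - l..<t}.
      (\<Sum>s\<in>S. real (tree_dist (T s) (acc (T s) X t) (acc (T s) X j) + 1)) \<le> card S * w t"
  shows "\<exists>s\<in>S. real (DistTree l (T s) X) \<le> (\<Sum>t=1..length X. w t)"
proof -
  from assms(3) have choice: "\<forall>t\<in>{1..length X}. \<exists>j. j \<in> {t - l..<t} \<and>
      (\<Sum>s\<in>S. real (tree_dist (T s) (acc (T s) X t) (acc (T s) X j) + 1)) \<le> card S * w t"
    by blast
  obtain J where J: "\<forall>t\<in>{1..length X}. J t \<in> {t - l..<t} \<and>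
      (\<Sum>s\<in>S. real (tree_dist (T s) (acc (T s) X t) (acc (T s) X (J t)) + 1)) \<le> card S * w t"
    using bchoice[OF choice] by blast
  have "(\<Sum>s\<in>S. real (DistTree l (T s) X))
      \<le> (\<Sum>s\<in>S. \<Sum>t=1..length X. real (tree_dist (T s) (acc (T s) X t) (acc (T s) X (J t)) + 1))"
  proof (intro sum_mono)
    fix s
    have "DistTree l (T s) X
        \<le> (\<Sum>t=1..length X. tree_dist (T s) (acc (T s) X t) (acc (T s) X (J t)) + 1)"
      using J by (intro DistTree_le_sum_choice) simp
    then show "real (DistTree l (T s) X)
        \<le> (\<Sum>t=1..length X. real (tree_dist (T s) (acc (T s) X t) (acc (T s) X (J t)) + 1))"
      by (metis of_nat_mono of_nat_sum)
  qed
  also have "\<dots>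
      = (\<Sum>t=1..length X. \<Sum>s\<in>S. real (tree_dist (T s) (acc (T s) X t) (acc (T s) X (J t)) + 1))"
    by (rule sum.swap)
  also have "\<dots> \<le> (\<Sum>t=1..length X. card S * w t)"
    using J by (intro sum_mono) simp
  also have "\<dots> = card S * (\<Sum>t=1..length X. w t)"
    by (simp add: sum_distrib_left)
  finally show ?thesis
    using ex_le_average assms(1,2) by blast
qed

definition UB_term :: "nat \<Rightarrow> nat \<Rightarrow> nat list \<Rightarrow> nat \<Rightarrow> real" where
  "UB_term l n X t =
     (let S = {t'. 1 \<le> t' \<and> t - l \<le> t' \<and> t' < t} in
      if S = {} then lg (real n)
      else Min ((\<lambda>t'. lg (\<bar>real (X ! (t - 1)) - real (X ! (t' - 1))\<bar>
                           + real (rho X t (X ! (t' - 1))))) ` S))"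

lemma UB_eq_sum_UB_term: "UB l n X = (\<Sum>t=1..length X. UB_term l n X t)"
  unfolding UB_def UB_term_def ..

lemma UB_term_1: "UB_term l n X 1 = lg (real n)"
  unfolding UB_term_def by simp

lemma UB_term_ge_lg_dist:
  assumes "1 \<le> l" "1 < t"
  shows "\<exists>t'. 1 \<le> t' \<and> t - l \<le> t' \<and> t' < t \<and>
    lg \<bar>real (X ! (t - 1)) - real (X ! (t' - 1))\<bar> \<le> UB_term l n X t"
proof -
  define S where "S = {t'. 1 \<le> t' \<and> t - l \<le> t' \<and> t' < t}"
  define f where
    "f t' = lg (\<bar>real (X ! (t - 1)) - real (X ! (t' - 1))\<bar> + real (rho X t (X ! (t' - 1))))" for t'
  have "t - 1 \<in> S"
    using assms unfolding S_def by auto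
  moreover have "finite S"
    unfolding S_def by auto
  ultimately have "Min (f ` S) \<in> f ` S"
    by (intro Min_in) auto
  then obtain t' where "t' \<in> S" "f t' = Min (f ` S)"
    by auto
  moreover have "UB_term l n X t = Min (f ` S)"
    using \<open>t - 1 \<in> S\<close> unfolding UB_term_def S_def[symmetric] f_def by auto
  moreover have "lg \<bar>real (X ! (t - 1)) - real (X ! (t' - 1))\<bar> \<le> f t'"
    unfolding f_def by (rule lg_mono) simp
  ultimately show ?thesis
    unfolding S_def by auto
qed

lemma dyadic_trees_access_bound:
  assumes "1 \<le> l" "set X \<subseteq> {1..n}" "n \<le> 2 ^ K" "real K \<le> lg (real n) + 1"
    and "t \<in> {1..length X}"
  shows "\<exists>j\<in>{t - l..<t}. (\<Sum>s<2 ^ K. real (tree_dist (dyadic_tree n s (Suc K) 0)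
      (acc (dyadic_tree n s (Suc K) 0) X t) (acc (dyadic_tree n s (Suc K) 0) X j) + 1))
    \<le> 2 ^ K * (9 * UB_term l n X t)"
proof (cases "t = 1")
  case True
  then have UB_first: "UB_term l n X t = lg (real n)"
    using UB_term_1 by blast
  have "real (tree_dist (dyadic_tree n s (Suc K) 0) a b + 1) \<le> 9 * lg (real n)" for s a b
  proof -
    have "tree_dist (dyadic_tree n s (Suc K) 0) a b \<le> 2 * Suc K"
      using tree_dist_le_height height_dyadic_tree by (meson le_trans mult_le_mono2)
    then show ?thesis
      using assms(4) lg_ge_1[of "real n"] by simp
  qed
  then have "(\<Sum>s<2 ^ K. real (tree_dist (dyadic_tree n s (Suc K) 0)
      (acc (dyadic_tree n s (Suc K) 0) X t) (acc (dyadic_tree n s (Suc K) 0) X 0) + 1))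
    \<le> (\<Sum>s<(2::nat) ^ K. 9 * lg (real n))"
    by (meson sum_mono)
  also have "\<dots> = 2 ^ K * (9 * UB_term l n X t)"
    using UB_first by simp
  finally show ?thesis
    using True assms(1) by (intro bexI[of _ 0]) simp_all
next
  case False
  then obtain t' where t': "1 \<le> t'" "t - l \<le> t'" "t' < t"
    and lg_le: "lg \<bar>real (X ! (t - 1)) - real (X ! (t' - 1))\<bar> \<le> UB_term l n X t"
    using UB_term_ge_lg_dist[OF assms(1)] assms(5) by (metis atLeastAtMost_iff le_neq_implies_less)
  have "X ! i \<in> {1..n}" if "i < length X" for i
    using assms(2) nth_mem[OF that] by blast
  then have "X ! (t - 1) \<in> {1..n}" "X ! (t' - 1) \<in> {1..n}"
    using assms(5) t' by simp_all
  from sum_tree_dist_dyadic_trees_le[OF this assms(3)]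
  have "(\<Sum>s<2 ^ K. real (tree_dist (dyadic_tree n s (Suc K) 0) (X ! (t - 1)) (X ! (t' - 1)) + 1))
    \<le> 2 ^ K * (9 * lg \<bar>real (X ! (t - 1)) - real (X ! (t' - 1))\<bar>)" .
  also have "\<dots> \<le> 2 ^ K * (9 * UB_term l n X t)"
    using lg_le by simp
  finally show ?thesis
    using t' assms(5) by (intro bexI[of _ t']) (simp_all add: acc_def)
qed

theorem lemma8:
  shows "\<exists>c>0. \<forall>l n (X :: nat list). 1 \<le> l \<and> n \<le> length X \<and> set X \<subseteq> {1..n} \<longrightarrow>
           (\<exists>T. bst T \<and> set_tree T = {1..n} \<and> real (DistTree l T X) \<le> c * UB l n X)"
proof (intro exI[of _ 9] conjI allI impI)
  fix l n :: nat and X :: "nat list"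
  assume "1 \<le> l \<and> n \<le> length X \<and> set X \<subseteq> {1..n}"
  then have l_ge_1: "1 \<le> l" and keys: "set X \<subseteq> {1..n}" by simp_all
  define K where "K = floorlog 2 n"
  have K_bounds: "n \<le> 2 ^ K" "real K \<le> lg (real n) + 1"
    unfolding K_def using less_power_floorlog_2[of n] floorlog_2_le_lg[of n] by simp_all
  have "\<exists>s\<in>{..<2 ^ K}.
      real (DistTree l (dyadic_tree n s (Suc K) 0) X) \<le> (\<Sum>t=1..length X. 9 * UB_term l n X t)"
    using dyadic_trees_access_bound[OF l_ge_1 keys K_bounds]
    by (intro DistTree_averaging) (simp_all add: lessThan_empty_iff)
  then obtain s where "s < 2 ^ K"
    and s: "real (DistTree l (dyadic_tree n s (Suc K) 0) X) \<le> 9 * UB l n X"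
    by (auto simp: UB_eq_sum_UB_term sum_distrib_left)
  then have "set_tree (dyadic_tree n s (Suc K) 0) = {1..n}"
    using K_bounds(1) by (auto simp: set_dyadic_tree)
  with s show "\<exists>T. bst T \<and> set_tree T = {1..n} \<and> real (DistTree l T X) \<le> 9 * UB l n X"
    using bst_dyadic_tree by blast
qed simp

end
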